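(* Let $(a_1,b_1)$ and $(a_2,b_2)$ be pairs of elements of a non-commutative space $(\mathcal{A},\varphi)$ such that the pairs $(\mathrm{alg}(a_1),\mathrm{alg}(b_1))$ and $(\mathrm{alg}(a_2),\mathrm{alg}(b_2))$ are bi-monotonically independent (order $1<2$), and such that for $k=1,2$ and all $m,n\ge0$, $\varphi(a_k^mb_k^n)=\int_{\mathbb{R}^2}x^my^n\,d\mu(x,y)$ with $\mu=\frac12(\delta_{(0,1)}+\delta_{(1,0)})$. Then, with rows and columns indexed by $(0,0),(1,0),(0,1),(1,1)$, the matrix $X_1=\big[\varphi((a_1+a_2)^{i_1+j_1}(b_1+b_2)^{i_2+j_2})\big]_{(i_1,i_2),(j_1,j_2)}$ equals \[X_1=\begin{bmatrix}1&1&1&\tfrac12\\1&\tfrac32&\tfrac12&\tfrac58\\1&\tfrac12&\tfrac32&\tfrac58\\\tfrac12&\tfrac58&\tfrac58&\tfrac34\end{bmatrix},\qquad \det X_1=-\tfrac1{32}.\] Consequently there is no positive Borel measure $\nu$ on $\mathbb{R}^2$ with $\varphi((a_1+a_2)^m(b_1+b_2)^n)=\int x^my^n\,d\nu$ for all $m,n\ge0$; i.e. bi-monotonic convolution does not preserve probability measures on $\mathbb{R}^2$.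
   Context: $\mathrm{alg}(x)$ is the non-unital algebra generated by $x$. A non-commutative space is a complex algebra with a linear functional ($\varphi(1)=1$ if unital). Bi-monotonic product: for pairs $(\mathcal{A}_{k,\ell},\mathcal{A}_{k,r})$ with functionals $\varphi_k$ on $\mathcal{A}_{k,\ell}\sqcup\mathcal{A}_{k,r}$ (free product without identification of units), $k=1,2$, $\varphi_1\rhd\!\!\rhd\varphi_2$ is the restriction to $(\mathcal{A}_{1,\ell}\sqcup\mathcal{A}_{1,r})\sqcup(\mathcal{A}_{2,\ell}\sqcup\mathcal{A}_{2,r})$ of the first functional of the c-bi-free product of $(\widetilde{\varphi_1},\delta_1)$ and $(\widetilde{\varphi_2},\widetilde{\varphi_2})$ on the unitized pairs $(\widetilde{\mathcal{A}_{k,\ell}},\widetilde{\mathcal{A}_{k,r}})$, where $\widetilde{\varphi_k}$ is the unital extension and $\delta_1$ the unital functional vanishing on $\mathcal{A}_{1,\ell}\sqcup\mathcal{A}_{1,r}$. The c-bi-free product of unital functionals $(\varphi_k,\psi_k)$ on $\mathcal{B}_{k,\ell}*\mathcal{B}_{k,r}$ is the unique pair $(\varphi,\psi)$ on $*_k(\mathcal{B}_{k,\ell}*\mathcal{B}_{k,r})$ extending them such that if $b_j\in\mathcal{B}_{\omega(j),\chi(j)}$ with $\psi(b_V)=0$ for all $V\in\pi_{\chi,\omega}$ then $\psi(b_1\cdots b_n)=0$ and $\varphi(b_1\cdots b_n)=\prod_{V\in\pi_{\chi,\omega}}\varphi(b_V)$; here $b_V$ is the product over $V$ in increasing index order, $\prec_\chi$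 is the order $i_1\prec_\chi\cdots\prec_\chi i_n$ with $\chi^{-1}(\ell)=\{i_1<\dots<i_p\}$, $\chi^{-1}(r)=\{i_{p+1}>\dots>i_n\}$, and $\pi_{\chi,\omega}$ is the unique partition into $\prec_\chi$-intervals $V_1,\dots,V_m$ (in $\prec_\chi$-order) on which $\omega$ is constant with $\omega(V_k)\ne\omega(V_{k+1})$. Two pairs of subalgebras are bi-monotonically independent (order $1<2$) if $\varphi$ composed with the canonical homomorphism from the free product equals $\varphi_1\rhd\!\!\rhd\varphi_2$ of the restrictions. *)

theory Defs
  imports "HOL-Probability.Probability" "Jordan_Normal_Form.Determinant"
begin

class cplx_algebra_1 = ring_1 +
  fixes scaleC :: "complex \<Rightarrow> 'a \<Rightarrow> 'a"
  assumes scaleC_add_right: "scaleC c (x + y) = scaleC c x + scaleC c y"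
      and scaleC_add_left: "scaleC (c + d) x = scaleC c x + scaleC d x"
      and scaleC_scaleC: "scaleC c (scaleC d x) = scaleC (c * d) x"
      and scaleC_one: "scaleC 1 x = x"
      and scaleC_mult_left: "scaleC c (x * y) = scaleC c x * y"
      and scaleC_mult_right: "scaleC c (x * y) = x * scaleC c y"

definition nc_space :: "('a::cplx_algebra_1 \<Rightarrow> complex) \<Rightarrow> bool" where
  "nc_space \<phi> \<longleftrightarrow> (\<forall>x y. \<phi> (x + y) = \<phi> x + \<phi> y) \<and>
                    (\<forall>c x. \<phi> (scaleC c x) = c * \<phi> x) \<and> \<phi> 1 = 1"

definition alg :: "'a::cplx_algebra_1 \<Rightarrow> 'a set" where
  "alg x = \<Inter>{B. x \<in> B \<and> (\<forall>u\<in>B. \<forall>v\<in>B. u + v \<in> B \<and> u * v \<in> B)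
                    \<and> (\<forall>c. \<forall>u\<in>B. scaleC c u \<in> B)}"

datatype side = Lft | Rgt

text \<open>A letter ((k, s), c, x) stands for the element c 1 + x of the unitization
  of the algebra A_{k,s} (x in A_{k,s}), placed in the free product.\<close>
type_synonym 'a letter = "(nat \<times> side) \<times> complex \<times> 'a"

definition ltag :: "'a letter \<Rightarrow> nat \<times> side" where "ltag l = fst l"
definition lcoef :: "'a letter \<Rightarrow> complex" where "lcoef l = fst (snd l)"
definition lelt :: "'a letter \<Rightarrow> 'a" where "lelt l = snd (snd l)"

definition lval :: "'a::cplx_algebra_1 letter \<Rightarrow> 'a" where
  "lval l = scaleC (lcoef l) 1 + lelt l"

definition wprod :: "'a::cplx_algebra_1 letter list \<Rightarrow> 'a" where
  "wprod w = prod_list (map lval w)"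

definition adm :: "(nat \<times> side \<Rightarrow> 'a set) \<Rightarrow> 'a letter list \<Rightarrow> bool" where
  "adm S w \<longleftrightarrow> (\<forall>l\<in>set w. fst (ltag l) \<in> {1,2} \<and> lelt l \<in> S (ltag l))"

text \<open>A linear functional on the (unital) free product of the unitizations
  *_k (B_{k,l} * B_{k,r}), given by its values on words: multilinear in
  each letter, invariant under deleting units and merging adjacent letters
  from the same algebra.\<close>
definition word_functional ::
  "(nat \<times> side \<Rightarrow> 'a::cplx_algebra_1 set) \<Rightarrow> ('a letter list \<Rightarrow> complex) \<Rightarrow> bool" where
  "word_functional S F \<longleftrightarrow>
    (\<forall>u v t c x c' x'. adm S (u @ [(t,c,x)] @ v) \<and> adm S (u @ [(t,c',x')] @ v) \<longrightarrow>
        F (u @ [(t, c + c', x + x')] @ v) = F (u @ [(t,c,x)] @ v) + F (u @ [(t,c',x')] @ v)) \<and>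
    (\<forall>u v t c x r. adm S (u @ [(t,c,x)] @ v) \<longrightarrow>
        F (u @ [(t, r * c, scaleC r x)] @ v) = r * F (u @ [(t,c,x)] @ v)) \<and>
    (\<forall>u v t. adm S (u @ v) \<and> fst t \<in> {1,2} \<longrightarrow> F (u @ [(t, 1, 0)] @ v) = F (u @ v)) \<and>
    (\<forall>u v t c x c' x'. adm S (u @ [(t,c,x), (t,c',x')] @ v) \<longrightarrow>
        F (u @ [(t,c,x), (t,c',x')] @ v) =
        F (u @ [(t, c * c', scaleC c x' + scaleC c' x + x * x')] @ v))"

fun runs :: "('b \<Rightarrow> 'c) \<Rightarrow> 'b list \<Rightarrow> 'b list list" where
  "runs f [] = []"
| "runs f (x # xs) = (case runs f xs of
      [] \<Rightarrow> [[x]]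
    | r # rs \<Rightarrow> (if f (hd r) = f x then (x # r) # rs else [x] # r # rs))"

definition chi_order :: "'a letter list \<Rightarrow> nat list" where
  "chi_order w = filter (\<lambda>j. snd (ltag (w ! j)) = Lft) [0..<length w]
               @ rev (filter (\<lambda>j. snd (ltag (w ! j)) = Rgt) [0..<length w])"

definition pi_chi_omega :: "'a letter list \<Rightarrow> nat set list" where
  "pi_chi_omega w = map set (runs (\<lambda>j. fst (ltag (w ! j))) (chi_order w))"

definition subword :: "'a letter list \<Rightarrow> nat set \<Rightarrow> 'a letter list" where
  "subword w V = nths w V"

definition cbifree_property ::
  "(nat \<times> side \<Rightarrow> 'a set) \<Rightarrow> ('a letter list \<Rightarrow> complex) \<Rightarrow> ('a letter list \<Rightarrow> complex) \<Rightarrow> bool" where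
  "cbifree_property S \<Phi> \<Psi> \<longleftrightarrow>
    (\<forall>w. adm S w \<and> w \<noteq> [] \<and> (\<forall>V\<in>set (pi_chi_omega w). \<Psi> (subword w V) = 0) \<longrightarrow>
        \<Psi> w = 0 \<and> \<Phi> w = prod_list (map (\<lambda>V. \<Phi> (subword w V)) (pi_chi_omega w)))"

text \<open>Pairs (S(1,Lft),S(1,Rgt)) and (S(2,Lft),S(2,Rgt)) of subalgebras of the
  non-commutative space (A,\<phi>) are bi-monotonically independent (order 1 < 2):
  \<phi> composed with the canonical homomorphism from the free product (without
  identification of units) agrees with \<phi>_1 \<rhd>\<rhd> \<phi>_2, the restriction to non-unital
  words of the first functional \<Phi> of the c-bi-free product of
  (\<phi>_1~, \<delta>_1) and (\<phi>_2~, \<phi>_2~).  Here \<phi>_k~ on words from pair k is \<phi> of the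
  product (the unital extension of the restriction \<phi>_k), and \<delta>_1 is the
  product of the unit coefficients.\<close>
definition bimonotone_indep ::
  "('a::cplx_algebra_1 \<Rightarrow> complex) \<Rightarrow> (nat \<times> side \<Rightarrow> 'a set) \<Rightarrow> bool" where
  "bimonotone_indep \<phi> S \<longleftrightarrow>
    (\<exists>\<Phi> \<Psi>. word_functional S \<Phi> \<and> word_functional S \<Psi> \<and>
       (\<forall>k\<in>{1,2}. \<forall>w. adm S w \<and> (\<forall>l\<in>set w. fst (ltag l) = k) \<longrightarrow> \<Phi> w = \<phi> (wprod w)) \<and>
       (\<forall>w. adm S w \<and> (\<forall>l\<in>set w. fst (ltag l) = 1) \<longrightarrow> \<Psi> w = prod_list (map lcoef w)) \<and>
       (\<forall>w. adm S w \<and> (\<forall>l\<in>set w. fst (ltag l) = 2) \<longrightarrow> \<Psi> w = \<phi> (wprod w)) \<and>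
       cbifree_property S \<Phi> \<Psi> \<and>
       (\<forall>w. adm S w \<and> w \<noteq> [] \<and> (\<forall>l\<in>set w. lcoef l = 0) \<longrightarrow> \<phi> (wprod w) = \<Phi> w))"

definition pair_algs :: "'a::cplx_algebra_1 \<Rightarrow> 'a \<Rightarrow> 'a \<Rightarrow> 'a \<Rightarrow> nat \<times> side \<Rightarrow> 'a set" where
  "pair_algs a1 b1 a2 b2 t =
     (case t of (k, Lft) \<Rightarrow> (if k = 1 then alg a1 else alg a2)
              | (k, Rgt) \<Rightarrow> (if k = 1 then alg b1 else alg b2))"

definition mu :: "(real \<times> real) measure" where
  "mu = measure_pmf (pmf_of_set {(0, 1), (1, 0)})"

definition idx :: "(nat \<times> nat) list" where
  "idx = [(0,0), (1,0), (0,1), (1,1)]"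

end

theory Submission
  imports Defs
begin

text \<open>The moments of (a_1 + a_2, b_1 + b_2) up to bidegree (2, 2) are expanded into words in the
  generators and each word is evaluated from the c-bi-free rule.  For a letter x of the second
  pair write x = (x - \<phi> x) + \<phi> x: the centred letter makes the whole word vanish as soon as
  every block of \<pi>_{\<chi>,\<omega>} has vanishing second functional (automatic for blocks of the
  first pair, where it is \<delta>_1), so x factors out with weight \<phi> x.  This reproduces the
  monotone rule along the order \<prec>_\<chi>, e.g. \<phi>(a_2 a_1 b_2) = \<phi>(a_2) \<phi>(a_1) \<phi>(b_2) = 1/8,
  and the vanishing of the mixed moments of \<mu> kills blocks such as {a_2, b_2}.
  The resulting moment matrix has determinant -1/32 and takes the value -1/4 at the vector
  (4, -2, -2, 1), whereas for a positive measure this value is the integral of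
  (4 - 2x - 2y + xy)^2.\<close>

lemma scaleC_zero_left [simp]: "scaleC 0 (x::'a::cplx_algebra_1) = 0"
  using scaleC_add_left[of 0 0 x] by simp

lemma scaleC_zero_right [simp]: "scaleC c (0::'a::cplx_algebra_1) = 0"
  using scaleC_add_right[of c 0 0] by simp

lemma alg_generator [simp]: "x \<in> alg x"
  unfolding alg_def by auto

lemma alg_mult: "u \<in> alg x \<Longrightarrow> v \<in> alg x \<Longrightarrow> u * v \<in> alg x"
  unfolding alg_def by auto

lemma alg_scaleC: "u \<in> alg x \<Longrightarrow> scaleC c u \<in> alg x"
  unfolding alg_def by auto

lemma alg_zero [simp]: "0 \<in> alg x"
  using alg_scaleC[where c = 0, OF alg_generator] by simp

lemma alg_power [simp]: "0 < n \<Longrightarrow> x ^ n \<in> alg x"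
  by (induction n rule: nat_induct_non_zero) (simp_all add: alg_mult)

lemma word_functional_add:
  assumes "word_functional S F" "adm S (u @ [(t, c, x)] @ v)" "adm S (u @ [(t, c', x')] @ v)"
  shows "F (u @ [(t, c + c', x + x')] @ v) = F (u @ [(t, c, x)] @ v) + F (u @ [(t, c', x')] @ v)"
proof -
  have "\<forall>u v t c x c' x'. adm S (u @ [(t,c,x)] @ v) \<and> adm S (u @ [(t,c',x')] @ v) \<longrightarrow>
        F (u @ [(t, c + c', x + x')] @ v) = F (u @ [(t,c,x)] @ v) + F (u @ [(t,c',x')] @ v)"
    using assms(1) unfolding word_functional_def by (rule conjunct1)
  then show ?thesis using assms(2,3) by blast
qed

lemma word_functional_scale:
  assumes "word_functional S F" "adm S (u @ [(t, c, x)] @ v)"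
  shows "F (u @ [(t, r * c, scaleC r x)] @ v) = r * F (u @ [(t, c, x)] @ v)"
proof -
  have "\<forall>u v t c x r. adm S (u @ [(t,c,x)] @ v) \<longrightarrow>
        F (u @ [(t, r * c, scaleC r x)] @ v) = r * F (u @ [(t,c,x)] @ v)"
    using assms(1) unfolding word_functional_def by (elim conjE)
  then show ?thesis using assms(2) by blast
qed

lemma word_functional_unit:
  assumes "word_functional S F" "adm S (u @ v)" "fst t \<in> {1, 2}"
  shows "F (u @ [(t, 1, 0)] @ v) = F (u @ v)"
proof -
  have "\<forall>u v t. adm S (u @ v) \<and> fst t \<in> {1,2} \<longrightarrow> F (u @ [(t, 1, 0)] @ v) = F (u @ v)"
    using assms(1) unfolding word_functional_def by (elim conjE)
  then show ?thesis using assms(2,3) by blast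
qed

lemma word_functional_split_unit:
  assumes F: "word_functional S F" and adm: "adm S (u @ [(t, 0, x)] @ v)"
    and t: "fst t \<in> {1, 2}" and zero: "0 \<in> S t"
  shows "F (u @ [(t, c, x)] @ v) = F (u @ [(t, 0, x)] @ v) + c * F (u @ v)"
proof -
  have adm_unit: "adm S (u @ [(t, 1, 0)] @ v)" and adm_uv: "adm S (u @ v)"
    using adm zero unfolding adm_def by (auto simp: ltag_def lelt_def)
  have "F (u @ [(t, 0 + c * 1, x + scaleC c 0)] @ v)
        = F (u @ [(t, 0, x)] @ v) + F (u @ [(t, c * 1, scaleC c 0)] @ v)"
    using adm adm_unit by (intro word_functional_add[OF F]) (auto simp: adm_def ltag_def lelt_def)
  also have "F (u @ [(t, c * 1, scaleC c 0)] @ v) = c * F (u @ [(t, 1, 0)] @ v)"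
    by (rule word_functional_scale[OF F adm_unit])
  also have "F (u @ [(t, 1, 0)] @ v) = F (u @ v)"
    by (rule word_functional_unit[OF F adm_uv t])
  finally show ?thesis by simp
qed

lemma integral_mu:
  fixes f :: "real \<times> real \<Rightarrow> real"
  shows "(\<integral>p. f p \<partial>mu) = (f (0, 1) + f (1, 0)) / 2"
  unfolding mu_def by (subst integral_pmf_of_set) auto

lemma moment_form_nonneg:
  fixes \<nu> :: "(real \<times> real) measure" and e :: "nat \<Rightarrow> nat \<times> nat" and c :: "nat \<Rightarrow> real"
  assumes "\<And>m n. integrable \<nu> (\<lambda>p. fst p ^ m * snd p ^ n)"
  shows "0 \<le> (\<Sum>r<N. \<Sum>s<N. c r * c s *
                (\<integral>p. fst p ^ (fst (e r) + fst (e s)) * snd p ^ (snd (e r) + snd (e s)) \<partial>\<nu>))"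
proof -
  let ?q = "\<lambda>p. \<Sum>r<N. c r * (fst p ^ fst (e r) * snd p ^ snd (e r))"
  have "(\<Sum>r<N. \<Sum>s<N. c r * c s *
                (\<integral>p. fst p ^ (fst (e r) + fst (e s)) * snd p ^ (snd (e r) + snd (e s)) \<partial>\<nu>))
        = (\<integral>p. (\<Sum>r<N. \<Sum>s<N. c r * c s *
                (fst p ^ (fst (e r) + fst (e s)) * snd p ^ (snd (e r) + snd (e s)))) \<partial>\<nu>)"
    using assms by (simp add: integral_sum)
  also have "\<dots> = (\<integral>p. (?q p)\<^sup>2 \<partial>\<nu>)"
    by (simp add: power2_eq_square sum_product power_add algebra_simps)
  also have "\<dots> \<ge> 0" by simp
  finally show ?thesis .
qed

abbreviation X_bimonotone :: "complex mat" where
  "X_bimonotone \<equiv> mat_of_rows_list 4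
     [[1, 1, 1, 1/2],
      [1, 3/2, 1/2, 5/8],
      [1, 1/2, 3/2, 5/8],
      [1/2, 5/8, 5/8, 3/4]]"

lemma X_bimonotone_not_moment_matrix:
  fixes \<nu> :: "(real \<times> real) measure"
  assumes int: "\<And>m n. integrable \<nu> (\<lambda>p. fst p ^ m * snd p ^ n)"
    and moments: "\<And>r s. r < 4 \<Longrightarrow> s < 4 \<Longrightarrow> X_bimonotone $$ (r, s) = complex_of_real
          (\<integral>p. fst p ^ (fst (idx ! r) + fst (idx ! s)) * snd p ^ (snd (idx ! r) + snd (idx ! s)) \<partial>\<nu>)"
  shows False
proof -
  define c :: "nat \<Rightarrow> real" where "c = (!) [4, -2, -2, 1]"
  have "0 \<le> (\<Sum>r<4. \<Sum>s<4. c r * c s * Re (X_bimonotone $$ (r, s)))"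
    using moment_form_nonneg[OF int, where N = 4 and c = c and e = "(!) idx"] by (simp add: moments)
  also have "\<dots> = - 1/4"
    by (simp add: c_def numeral_eq_Suc lessThan_Suc mat_of_rows_list_def)
  finally show False by simp
qed

lemma mat_of_rows_list_carrier: "length rs = n \<Longrightarrow> mat_of_rows_list m rs \<in> carrier_mat n m"
  unfolding mat_of_rows_list_def carrier_mat_def by simp

lemma index_mult_mat_4:
  assumes "A \<in> carrier_mat 4 4" "B \<in> carrier_mat 4 4" "i < 4" "j < 4"
  shows "(A * B) $$ (i, j) = A $$ (i, 0) * B $$ (0, j) + A $$ (i, 1) * B $$ (1, j)
                          + A $$ (i, 2) * B $$ (2, j) + A $$ (i, 3) * B $$ (3, j)"
  using assms by (simp add: scalar_prod_def numeral_eq_Suc atLeast0_lessThan_Suc algebra_simps)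

lemma less_4_cases: "i < (4::nat) \<Longrightarrow> i = 0 \<or> i = 1 \<or> i = 2 \<or> i = 3"
  by auto

text \<open>The leading 3 \<times> 3 minor of the matrix vanishes, so there is no LU decomposition; an
  upper-times-lower factorisation exists instead.\<close>
lemma det_X_bimonotone: "det X_bimonotone = - 1/32"
proof -
  define U :: "complex mat" where "U = mat_of_rows_list 4
    [[1, 14/23, 28/47, 2/3], [0, 1, -1/47, 5/6], [0, 0, 1, 5/6], [0, 0, 0, 1]]"
  define L :: "complex mat" where "L = mat_of_rows_list 4
    [[-1/23, 0, 0, 0], [28/47, 46/47, 0, 0], [7/12, -1/48, 47/48, 0], [1/2, 5/8, 5/8, 3/4]]"
  have U: "U \<in> carrier_mat 4 4" and L: "L \<in> carrier_mat 4 4"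
    unfolding U_def L_def by (simp_all add: mat_of_rows_list_carrier)
  have "X_bimonotone = U * L"
  proof (rule eq_matI)
    fix i j assume "i < dim_row (U * L)" "j < dim_col (U * L)"
    then have ij: "i < 4" "j < 4" using U L by auto
    show "X_bimonotone $$ (i, j) = (U * L) $$ (i, j)"
      unfolding index_mult_mat_4[OF U L ij] using less_4_cases[OF ij(1)] less_4_cases[OF ij(2)]
      by (elim disjE) (simp_all add: U_def L_def mat_of_rows_list_def)
  qed (use U L in \<open>simp_all add: mat_of_rows_list_def\<close>)
  moreover have "det U = 1"
  proof -
    have "upper_triangular U"
      unfolding upper_triangular_def
    proof (intro allI impI)
      fix i j assume "i < dim_row U" "j < i"
      then show "U $$ (i, j) = 0" using U less_4_cases[of i] less_4_cases[of j]
        by (auto simp: U_def mat_of_rows_list_def)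
    qed
    then show ?thesis
      using U by (simp add: det_upper_triangular diag_mat_def upt_rec U_def mat_of_rows_list_def)
  qed
  moreover have "det L = - 1/32"
  proof -
    have "det L = prod_list (diag_mat L)"
    proof (rule det_lower_triangular[OF _ L])
      fix i j :: nat assume "i < j" "j < 4"
      then show "L $$ (i, j) = 0" using less_4_cases[of i] less_4_cases[of j]
        by (auto simp: L_def mat_of_rows_list_def)
    qed
    then show ?thesis using L by (simp add: diag_mat_def upt_rec L_def mat_of_rows_list_def)
  qed
  ultimately show ?thesis by (simp add: det_mult[OF U L])
qed

lemma power2_sum_noncomm: "(x + y) ^ 2 = x ^ 2 + x * y + y * x + y ^ 2" for x y :: "'a::ring_1"
  by (simp add: power2_eq_square algebra_simps)

abbreviation lft :: "nat \<Rightarrow> 'a \<Rightarrow> 'a letter" where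
  "lft k x \<equiv> ((k, Lft), 0, x)"

abbreviation rgt :: "nat \<Rightarrow> 'a \<Rightarrow> 'a letter" where
  "rgt k x \<equiv> ((k, Rgt), 0, x)"

locale bimonotone_pair =
  fixes \<phi> :: "'a::cplx_algebra_1 \<Rightarrow> complex" and a1 b1 a2 b2 :: 'a
    and \<Phi> \<Psi> :: "'a letter list \<Rightarrow> complex"
  assumes nc_space: "nc_space \<phi>"
    and Phi_functional: "word_functional (pair_algs a1 b1 a2 b2) \<Phi>"
    and Phi_single_pair: "\<And>k w. k \<in> {1, 2} \<Longrightarrow> adm (pair_algs a1 b1 a2 b2) w \<Longrightarrow>
          \<forall>l\<in>set w. fst (ltag l) = k \<Longrightarrow> \<Phi> w = \<phi> (wprod w)"
    and Psi_first_pair: "\<And>w. adm (pair_algs a1 b1 a2 b2) w \<Longrightarrow>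
          \<forall>l\<in>set w. fst (ltag l) = 1 \<Longrightarrow> \<Psi> w = prod_list (map lcoef w)"
    and Psi_second_pair: "\<And>w. adm (pair_algs a1 b1 a2 b2) w \<Longrightarrow>
          \<forall>l\<in>set w. fst (ltag l) = 2 \<Longrightarrow> \<Psi> w = \<phi> (wprod w)"
    and cbifree: "cbifree_property (pair_algs a1 b1 a2 b2) \<Phi> \<Psi>"
    and phi_wprod: "\<And>w. adm (pair_algs a1 b1 a2 b2) w \<Longrightarrow> w \<noteq> [] \<Longrightarrow>
          \<forall>l\<in>set w. lcoef l = 0 \<Longrightarrow> \<phi> (wprod w) = \<Phi> w"
begin

abbreviation S :: "nat \<times> side \<Rightarrow> 'a set" where
  "S \<equiv> pair_algs a1 b1 a2 b2"

text \<open>With the letter (t, c, x) standing for c 1 + x, this is the centred element x - \<phi> x 1.\<close>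
abbreviation centered :: "nat \<times> side \<Rightarrow> 'a \<Rightarrow> 'a letter" where
  "centered t x \<equiv> (t, - \<phi> x, x)"

lemma phi_add [simp]: "\<phi> (x + y) = \<phi> x + \<phi> y"
  and phi_scaleC [simp]: "\<phi> (scaleC c x) = c * \<phi> x"
  and phi_one [simp]: "\<phi> 1 = 1"
  using nc_space unfolding nc_space_def by blast+

lemma Phi_eq_phi:
  "adm S w \<Longrightarrow> w \<noteq> [] \<Longrightarrow> \<forall>l\<in>set w. lcoef l = 0 \<Longrightarrow> \<Phi> w = \<phi> (wprod w)"
  by (simp add: phi_wprod)

lemma zero_in_S [simp]: "0 \<in> S t"
  by (cases t; cases "snd t") (auto simp: pair_algs_def)

lemma Phi_factor:
  assumes "fst t = 2" "adm S (u @ [(t, 0, x)] @ v)" "\<Phi> (u @ [centered t x] @ v) = 0"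
  shows "\<Phi> (u @ [(t, 0, x)] @ v) = \<phi> x * \<Phi> (u @ v)"
  using word_functional_split_unit[OF Phi_functional assms(2), of "- \<phi> x"] assms by simp

text \<open>Instances of Phi_factor at fixed positions, so that they apply by rule to explicit
  words.\<close>
lemma Phi_factor_first:
  "fst t = 2 \<Longrightarrow> adm S ((t, 0, x) # v) \<Longrightarrow> \<Phi> (centered t x # v) = 0 \<Longrightarrow>
   \<Phi> ((t, 0, x) # v) = \<phi> x * \<Phi> v"
  using Phi_factor[of t "[]" x v] by simp

lemma Phi_factor_second:
  "fst t = 2 \<Longrightarrow> adm S (y # (t, 0, x) # v) \<Longrightarrow> \<Phi> (y # centered t x # v) = 0 \<Longrightarrow>
   \<Phi> (y # (t, 0, x) # v) = \<phi> x * \<Phi> (y # v)"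
  using Phi_factor[of t "[y]" x v] by simp

lemma Phi_factor_third:
  "fst t = 2 \<Longrightarrow> adm S (y # z # (t, 0, x) # v) \<Longrightarrow> \<Phi> (y # z # centered t x # v) = 0 \<Longrightarrow>
   \<Phi> (y # z # (t, 0, x) # v) = \<phi> x * \<Phi> (y # z # v)"
  using Phi_factor[of t "[y, z]" x v] by simp

lemma Phi_factor_fourth:
  "fst t = 2 \<Longrightarrow> adm S (y # z # z' # (t, 0, x) # v) \<Longrightarrow>
   \<Phi> (y # z # z' # centered t x # v) = 0 \<Longrightarrow> \<Phi> (y # z # z' # (t, 0, x) # v) = \<phi> x * \<Phi> (y # z # z' # v)"
  using Phi_factor[of t "[y, z, z']" x v] by simp

lemma Phi_vanishing:
  assumes w: "adm S w" "w \<noteq> []"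
    and blocks: "\<forall>V\<in>set (pi_chi_omega w). \<Psi> (subword w V) = 0"
    and second: "\<exists>V\<in>set (pi_chi_omega w). \<forall>l\<in>set (subword w V). fst (ltag l) = 2"
  shows "\<Phi> w = 0"
proof -
  obtain V where V: "V \<in> set (pi_chi_omega w)" "\<forall>l\<in>set (subword w V). fst (ltag l) = 2"
    using second by blast
  have "set (subword w V) \<subseteq> set w"
    by (simp add: subword_def set_nths_subset)
  then have "adm S (subword w V)"
    using w(1) by (auto simp: adm_def)
  then have "\<Phi> (subword w V) = \<Psi> (subword w V)"
    using V(2) Phi_single_pair[of 2] Psi_second_pair by simp
  then have "\<Phi> (subword w V) = 0"
    using blocks V(1) by simp
  moreover have "\<Phi> w = prod_list (map (\<lambda>V. \<Phi> (subword w V)) (pi_chi_omega w))"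
    using cbifree[unfolded cbifree_property_def, rule_format, of w] w blocks by simp
  ultimately show ?thesis
    using V(1) by (auto simp: prod_list_zero_iff)
qed

lemmas word_simps = adm_def pair_algs_def ltag_def lelt_def lcoef_def wprod_def lval_def
  pi_chi_omega_def chi_order_def subword_def upt_rec nths_Cons
  Psi_first_pair Psi_second_pair

end

locale bimonotone_pair_mu = bimonotone_pair +
  assumes moments_first [simp]: "\<And>m n. \<phi> (a1 ^ m * b1 ^ n) = (0 ^ m + 0 ^ n) / 2"
    and moments_second [simp]: "\<And>m n. \<phi> (a2 ^ m * b2 ^ n) = (0 ^ m + 0 ^ n) / 2"
begin

declare zero_power [simp]

lemma phi_power [simp]:
  "\<phi> (a1 ^ m) = (0 ^ m + 1) / 2" "\<phi> (b1 ^ m) = (0 ^ m + 1) / 2"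
  "\<phi> (a2 ^ m) = (0 ^ m + 1) / 2" "\<phi> (b2 ^ m) = (0 ^ m + 1) / 2"
  using moments_first[of m 0] moments_first[of 0 m] moments_second[of m 0] moments_second[of 0 m]
  by simp_all

lemma phi_generator [simp]: "\<phi> a1 = 1/2" "\<phi> b1 = 1/2" "\<phi> a2 = 1/2" "\<phi> b2 = 1/2"
  using phi_power[where m = 1] by simp_all

lemma phi_power_generator [simp]:
  "\<phi> (a1 ^ m * b1) = 0 ^ m / 2" "\<phi> (a1 * b1 ^ m) = 0 ^ m / 2" "\<phi> (a1 * b1) = 0"
  "\<phi> (a2 ^ m * b2) = 0 ^ m / 2" "\<phi> (a2 * b2 ^ m) = 0 ^ m / 2" "\<phi> (a2 * b2) = 0"
  using moments_first[of m 1] moments_first[of 1 m] moments_first[of 1 1]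
    moments_second[of m 1] moments_second[of 1 m] moments_second[of 1 1]
  by simp_all

lemma phi_a1_b2 [simp]:
  assumes "0 < i" "0 < j"
  shows "\<phi> (a1 ^ i * b2 ^ j) = 1/4"
proof -
  have "\<phi> (a1 ^ i * b2 ^ j) = \<Phi> [lft 1 (a1 ^ i), rgt 2 (b2 ^ j)]"
    using assms by (simp add: Phi_eq_phi word_simps)
  also have "\<dots> = \<phi> (b2 ^ j) * \<Phi> [lft 1 (a1 ^ i)]"
    using assms by (intro Phi_factor_second Phi_vanishing) (simp_all add: word_simps)
  also have "\<dots> = 1/4"
    using assms by (simp add: Phi_eq_phi word_simps)
  finally show ?thesis .
qed

lemma phi_a2_b1 [simp]:
  assumes "0 < i" "0 < j"
  shows "\<phi> (a2 ^ i * b1 ^ j) = 1/4"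
proof -
  have "\<phi> (a2 ^ i * b1 ^ j) = \<Phi> [lft 2 (a2 ^ i), rgt 1 (b1 ^ j)]"
    using assms by (simp add: Phi_eq_phi word_simps)
  also have "\<dots> = \<phi> (a2 ^ i) * \<Phi> [rgt 1 (b1 ^ j)]"
    using assms by (intro Phi_factor_first Phi_vanishing) (simp_all add: word_simps)
  also have "\<dots> = 1/4"
    using assms by (simp add: Phi_eq_phi word_simps)
  finally show ?thesis .
qed

lemma phi_b1b2 [simp]:
  "\<phi> (b1 * b2) = 1/4"
proof -
  have "\<phi> (b1 * b2) = \<Phi> [rgt 1 b1, rgt 2 b2]"
    by (simp add: Phi_eq_phi word_simps)
  also have "\<dots> = \<phi> b2 * \<Phi> [rgt 1 b1]"
    by (intro Phi_factor_second Phi_vanishing) (simp_all add: word_simps)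
  also have "\<dots> = 1/4"
    by (simp add: Phi_eq_phi word_simps)
  finally show ?thesis .
qed

lemma phi_b2b1 [simp]:
  "\<phi> (b2 * b1) = 1/4"
proof -
  have "\<phi> (b2 * b1) = \<Phi> [rgt 2 b2, rgt 1 b1]"
    by (simp add: Phi_eq_phi word_simps)
  also have "\<dots> = \<phi> b2 * \<Phi> [rgt 1 b1]"
    by (intro Phi_factor_first Phi_vanishing) (simp_all add: word_simps)
  also have "\<dots> = 1/4"
    by (simp add: Phi_eq_phi word_simps)
  finally show ?thesis .
qed

lemma phi_a1a2 [simp]:
  "\<phi> (a1 * a2) = 1/4"
proof -
  have "\<phi> (a1 * a2) = \<Phi> [lft 1 a1, lft 2 a2]"
    by (simp add: Phi_eq_phi word_simps)
  also have "\<dots> = \<phi> a2 * \<Phi> [lft 1 a1]"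
    by (intro Phi_factor_second Phi_vanishing) (simp_all add: word_simps)
  also have "\<dots> = 1/4"
    by (simp add: Phi_eq_phi word_simps)
  finally show ?thesis .
qed

lemma phi_a2a1 [simp]:
  "\<phi> (a2 * a1) = 1/4"
proof -
  have "\<phi> (a2 * a1) = \<Phi> [lft 2 a2, lft 1 a1]"
    by (simp add: Phi_eq_phi word_simps)
  also have "\<dots> = \<phi> a2 * \<Phi> [lft 1 a1]"
    by (intro Phi_factor_first Phi_vanishing) (simp_all add: word_simps)
  also have "\<dots> = 1/4"
    by (simp add: Phi_eq_phi word_simps)
  finally show ?thesis .
qed

lemma phi_a1_b1b2 [simp]:
  assumes "0 < i"
  shows "\<phi> (a1 ^ i * (b1 * b2)) = 0"
proof -
  have "\<phi> (a1 ^ i * (b1 * b2)) = \<Phi> [lft 1 (a1 ^ i), rgt 1 b1, rgt 2 b2]"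
    using assms by (simp add: Phi_eq_phi word_simps)
  also have "\<dots> = \<phi> b2 * \<Phi> [lft 1 (a1 ^ i), rgt 1 b1]"
    using assms by (intro Phi_factor_third Phi_vanishing) (simp_all add: word_simps)
  also have "\<dots> = 0"
    using assms by (simp add: Phi_eq_phi word_simps)
  finally show ?thesis .
qed

lemma phi_a1_b2b1 [simp]:
  assumes "0 < i"
  shows "\<phi> (a1 ^ i * (b2 * b1)) = 0"
proof -
  have "\<phi> (a1 ^ i * (b2 * b1)) = \<Phi> [lft 1 (a1 ^ i), rgt 2 b2, rgt 1 b1]"
    using assms by (simp add: Phi_eq_phi word_simps)
  also have "\<dots> = \<phi> b2 * \<Phi> [lft 1 (a1 ^ i), rgt 1 b1]"
    using assms by (intro Phi_factor_second Phi_vanishing) (simp_all add: word_simps)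
  also have "\<dots> = 0"
    using assms by (simp add: Phi_eq_phi word_simps)
  finally show ?thesis .
qed

lemma phi_a2_b1b2 [simp]:
  assumes "0 < i"
  shows "\<phi> (a2 ^ i * (b1 * b2)) = 0"
proof -
  have "\<phi> (a2 ^ i * (b1 * b2)) = \<Phi> [lft 2 (a2 ^ i), rgt 1 b1, rgt 2 b2]"
    using assms by (simp add: Phi_eq_phi word_simps)
  also have "\<dots> = 0"
    using assms by (intro Phi_vanishing) (simp_all add: word_simps)
  finally show ?thesis .
qed

text \<open>After centring a_2 the block {b_2} still has nonzero \<Psi>, so b_2 is first factored out of
  the centred word.\<close>
lemma phi_a2_b2b1 [simp]:
  assumes "0 < i"
  shows "\<phi> (a2 ^ i * (b2 * b1)) = 1/8"
proof -
  have "\<Phi> [centered (2, Lft) (a2 ^ i), rgt 2 b2, rgt 1 b1] =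
        \<phi> b2 * \<Phi> [centered (2, Lft) (a2 ^ i), rgt 1 b1]"
    using assms by (intro Phi_factor_second Phi_vanishing) (simp_all add: word_simps)
  also have "\<Phi> [centered (2, Lft) (a2 ^ i), rgt 1 b1] = 0"
    using assms by (intro Phi_vanishing) (simp_all add: word_simps)
  finally have centered: "\<Phi> [centered (2, Lft) (a2 ^ i), rgt 2 b2, rgt 1 b1] = 0"
    by simp
  have "\<phi> (a2 ^ i * (b2 * b1)) = \<Phi> [lft 2 (a2 ^ i), rgt 2 b2, rgt 1 b1]"
    using assms by (simp add: Phi_eq_phi word_simps)
  also have "\<dots> = \<phi> (a2 ^ i) * \<Phi> [rgt 2 b2, rgt 1 b1]"
    using assms by (intro Phi_factor_first[OF _ _ centered]) (simp_all add: word_simps)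
  also have "\<dots> = 1/8"
    using assms by (simp add: Phi_eq_phi word_simps)
  finally show ?thesis .
qed

lemma phi_a1a2_b1 [simp]:
  assumes "0 < j"
  shows "\<phi> (a1 * (a2 * b1 ^ j)) = 0"
proof -
  have "\<phi> (a1 * (a2 * b1 ^ j)) = \<Phi> [lft 1 a1, lft 2 a2, rgt 1 (b1 ^ j)]"
    using assms by (simp add: Phi_eq_phi word_simps)
  also have "\<dots> = \<phi> a2 * \<Phi> [lft 1 a1, rgt 1 (b1 ^ j)]"
    using assms by (intro Phi_factor_second Phi_vanishing) (simp_all add: word_simps)
  also have "\<dots> = 0"
    using assms by (simp add: Phi_eq_phi word_simps)
  finally show ?thesis .
qed

lemma phi_a1a2_b2 [simp]:
  assumes "0 < j"
  shows "\<phi> (a1 * (a2 * b2 ^ j)) = 0"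
proof -
  have "\<phi> (a1 * (a2 * b2 ^ j)) = \<Phi> [lft 1 a1, lft 2 a2, rgt 2 (b2 ^ j)]"
    using assms by (simp add: Phi_eq_phi word_simps)
  also have "\<dots> = 0"
    using assms by (intro Phi_vanishing) (simp_all add: word_simps)
  finally show ?thesis .
qed

lemma phi_a2a1_b1 [simp]:
  assumes "0 < j"
  shows "\<phi> (a2 * (a1 * b1 ^ j)) = 0"
proof -
  have "\<phi> (a2 * (a1 * b1 ^ j)) = \<Phi> [lft 2 a2, lft 1 a1, rgt 1 (b1 ^ j)]"
    using assms by (simp add: Phi_eq_phi word_simps)
  also have "\<dots> = \<phi> a2 * \<Phi> [lft 1 a1, rgt 1 (b1 ^ j)]"
    using assms by (intro Phi_factor_first Phi_vanishing) (simp_all add: word_simps)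
  also have "\<dots> = 0"
    using assms by (simp add: Phi_eq_phi word_simps)
  finally show ?thesis .
qed

lemma phi_a2a1_b2 [simp]:
  assumes "0 < j"
  shows "\<phi> (a2 * (a1 * b2 ^ j)) = 1/8"
proof -
  have "\<Phi> [centered (2, Lft) a2, lft 1 a1, rgt 2 (b2 ^ j)] =
        \<phi> (b2 ^ j) * \<Phi> [centered (2, Lft) a2, lft 1 a1]"
    using assms by (intro Phi_factor_third Phi_vanishing) (simp_all add: word_simps)
  also have "\<Phi> [centered (2, Lft) a2, lft 1 a1] = 0"
    using assms by (intro Phi_vanishing) (simp_all add: word_simps)
  finally have centered: "\<Phi> [centered (2, Lft) a2, lft 1 a1, rgt 2 (b2 ^ j)] = 0"
    by simp
  have "\<phi> (a2 * (a1 * b2 ^ j)) = \<Phi> [lft 2 a2, lft 1 a1, rgt 2 (b2 ^ j)]"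
    using assms by (simp add: Phi_eq_phi word_simps)
  also have "\<dots> = \<phi> a2 * \<Phi> [lft 1 a1, rgt 2 (b2 ^ j)]"
    using assms by (intro Phi_factor_first[OF _ _ centered]) (simp_all add: word_simps)
  also have "\<dots> = 1/8"
    using assms by (simp add: Phi_eq_phi word_simps phi_a1_b2[of 1 j, unfolded power_one_right])
  finally show ?thesis .
qed

lemma phi_a1a2_b1b2 [simp]:
  "\<phi> (a1 * (a2 * (b1 * b2))) = 0"
proof -
  have "\<phi> (a1 * (a2 * (b1 * b2))) = \<Phi> [lft 1 a1, lft 2 a2, rgt 1 b1, rgt 2 b2]"
    by (simp add: Phi_eq_phi word_simps)
  also have "\<dots> = 0"
    by (intro Phi_vanishing) (simp_all add: word_simps)
  finally show ?thesis .
qed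

lemma phi_a1a2_b2b1 [simp]:
  "\<phi> (a1 * (a2 * (b2 * b1))) = 0"
proof -
  have "\<Phi> [lft 1 a1, centered (2, Lft) a2, rgt 2 b2, rgt 1 b1] =
        \<phi> b2 * \<Phi> [lft 1 a1, centered (2, Lft) a2, rgt 1 b1]"
    by (intro Phi_factor_third Phi_vanishing) (simp_all add: word_simps)
  also have "\<Phi> [lft 1 a1, centered (2, Lft) a2, rgt 1 b1] = 0"
    by (intro Phi_vanishing) (simp_all add: word_simps)
  finally have centered: "\<Phi> [lft 1 a1, centered (2, Lft) a2, rgt 2 b2, rgt 1 b1] = 0"
    by simp
  have "\<phi> (a1 * (a2 * (b2 * b1))) = \<Phi> [lft 1 a1, lft 2 a2, rgt 2 b2, rgt 1 b1]"
    by (simp add: Phi_eq_phi word_simps)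
  also have "\<dots> = \<phi> a2 * \<Phi> [lft 1 a1, rgt 2 b2, rgt 1 b1]"
    by (intro Phi_factor_second[OF _ _ centered]) (simp_all add: word_simps)
  also have "\<dots> = 0"
    by (simp add: Phi_eq_phi word_simps phi_a1_b2b1[of 1, unfolded power_one_right])
  finally show ?thesis .
qed

lemma phi_a2a1_b1b2 [simp]:
  "\<phi> (a2 * (a1 * (b1 * b2))) = 0"
proof -
  have "\<Phi> [centered (2, Lft) a2, lft 1 a1, rgt 1 b1, rgt 2 b2] =
        \<phi> b2 * \<Phi> [centered (2, Lft) a2, lft 1 a1, rgt 1 b1]"
    by (intro Phi_factor_fourth Phi_vanishing) (simp_all add: word_simps)
  also have "\<Phi> [centered (2, Lft) a2, lft 1 a1, rgt 1 b1] = 0"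
    by (intro Phi_vanishing) (simp_all add: word_simps)
  finally have centered: "\<Phi> [centered (2, Lft) a2, lft 1 a1, rgt 1 b1, rgt 2 b2] = 0"
    by simp
  have "\<phi> (a2 * (a1 * (b1 * b2))) = \<Phi> [lft 2 a2, lft 1 a1, rgt 1 b1, rgt 2 b2]"
    by (simp add: Phi_eq_phi word_simps)
  also have "\<dots> = \<phi> a2 * \<Phi> [lft 1 a1, rgt 1 b1, rgt 2 b2]"
    by (intro Phi_factor_first[OF _ _ centered]) (simp_all add: word_simps)
  also have "\<dots> = 0"
    by (simp add: Phi_eq_phi word_simps phi_a1_b1b2[of 1, unfolded power_one_right])
  finally show ?thesis .
qed

lemma phi_a2a1_b2b1 [simp]:
  "\<phi> (a2 * (a1 * (b2 * b1))) = 0"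
proof -
  have "\<Phi> [centered (2, Lft) a2, lft 1 a1, rgt 2 b2, rgt 1 b1] =
        \<phi> b2 * \<Phi> [centered (2, Lft) a2, lft 1 a1, rgt 1 b1]"
    by (intro Phi_factor_third Phi_vanishing) (simp_all add: word_simps)
  also have "\<Phi> [centered (2, Lft) a2, lft 1 a1, rgt 1 b1] = 0"
    by (intro Phi_vanishing) (simp_all add: word_simps)
  finally have centered: "\<Phi> [centered (2, Lft) a2, lft 1 a1, rgt 2 b2, rgt 1 b1] = 0"
    by simp
  have "\<phi> (a2 * (a1 * (b2 * b1))) = \<Phi> [lft 2 a2, lft 1 a1, rgt 2 b2, rgt 1 b1]"
    by (simp add: Phi_eq_phi word_simps)
  also have "\<dots> = \<phi> a2 * \<Phi> [lft 1 a1, rgt 2 b2, rgt 1 b1]"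
    by (intro Phi_factor_first[OF _ _ centered]) (simp_all add: word_simps)
  also have "\<dots> = 0"
    by (simp add: Phi_eq_phi word_simps phi_a1_b2b1[of 1, unfolded power_one_right])
  finally show ?thesis .
qed

text \<open>The simplifier rewrites x ^ 1 to x, so the exponent-one instances are needed as well.\<close>
lemmas phi_mixed_generators [simp] =
  phi_a1_b2[of 1 1, unfolded power_one_right] phi_a1_b2[of 1, unfolded power_one_right]
  phi_a1_b2[of _ 1, unfolded power_one_right] phi_a2_b1[of 1 1, unfolded power_one_right]
  phi_a2_b1[of 1, unfolded power_one_right] phi_a2_b1[of _ 1, unfolded power_one_right]
  phi_a1_b1b2[of 1, unfolded power_one_right] phi_a1_b2b1[of 1, unfolded power_one_right]
  phi_a2_b1b2[of 1, unfolded power_one_right] phi_a2_b2b1[of 1, unfolded power_one_right]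
  phi_a1a2_b1[of 1, unfolded power_one_right] phi_a1a2_b2[of 1, unfolded power_one_right]
  phi_a2a1_b1[of 1, unfolded power_one_right] phi_a2a1_b2[of 1, unfolded power_one_right]

lemma phi_sum_moments:
  assumes "m \<le> 2" "n \<le> 2"
  shows "\<phi> ((a1 + a2) ^ m * (b1 + b2) ^ n) = [[1, 1, 3/2], [1, 1/2, 5/8], [3/2, 5/8, 3/4]] ! m ! n"
proof -
  have "m \<in> {0, 1, 2}" "n \<in> {0, 1, 2}"
    using assms by auto
  then show ?thesis
    by (auto simp add: power2_sum_noncomm distrib_left distrib_right mult.assoc)
qed

lemma moment_matrix_sums:
  "mat 4 4 (\<lambda>(r, s). \<phi> ((a1 + a2) ^ (fst (idx ! r) + fst (idx ! s))
                           * (b1 + b2) ^ (snd (idx ! r) + snd (idx ! s)))) = X_bimonotone"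
  (is "?X = _")
proof (rule eq_matI)
  fix r s assume "r < dim_row X_bimonotone" "s < dim_col X_bimonotone"
  then have rs: "r < 4" "s < 4"
    by (simp_all add: mat_of_rows_list_def)
  then have "fst (idx ! r) + fst (idx ! s) \<le> 2" "snd (idx ! r) + snd (idx ! s) \<le> 2"
    using less_4_cases[of r] less_4_cases[of s] by (auto simp: idx_def)
  then show "?X $$ (r, s) = X_bimonotone $$ (r, s)"
    using rs less_4_cases[of r] less_4_cases[of s]
    by (auto simp: phi_sum_moments idx_def mat_of_rows_list_def simp del: phi_add)
qed (simp_all add: mat_of_rows_list_def)

lemma no_representing_measure:
  "\<not> (\<exists>\<nu> :: (real \<times> real) measure. \<forall>m n::nat. integrable \<nu> (\<lambda>p. fst p ^ m * snd p ^ n) \<and>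
        \<phi> ((a1 + a2) ^ m * (b1 + b2) ^ n) = complex_of_real (\<integral>p. fst p ^ m * snd p ^ n \<partial>\<nu>))"
proof
  assume "\<exists>\<nu> :: (real \<times> real) measure. \<forall>m n::nat. integrable \<nu> (\<lambda>p. fst p ^ m * snd p ^ n) \<and>
        \<phi> ((a1 + a2) ^ m * (b1 + b2) ^ n) = complex_of_real (\<integral>p. fst p ^ m * snd p ^ n \<partial>\<nu>)"
  then obtain \<nu> :: "(real \<times> real) measure"
    where int: "\<And>m n. integrable \<nu> (\<lambda>p. fst p ^ m * snd p ^ n)"
      and moments: "\<And>m n. \<phi> ((a1 + a2) ^ m * (b1 + b2) ^ n)
                        = complex_of_real (\<integral>p. fst p ^ m * snd p ^ n \<partial>\<nu>)"
    by blast
  show False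
  proof (rule X_bimonotone_not_moment_matrix[OF int])
    fix r s :: nat assume "r < 4" "s < 4"
    then show "X_bimonotone $$ (r, s) = complex_of_real (\<integral>p. fst p ^ (fst (idx ! r) + fst (idx ! s))
                 * snd p ^ (snd (idx ! r) + snd (idx ! s)) \<partial>\<nu>)"
      by (simp add: moment_matrix_sums[symmetric] moments)
  qed
qed

end

lemma bimonotone_pair_mu_exists:
  assumes "nc_space \<phi>" and "bimonotone_indep \<phi> (pair_algs a1 b1 a2 b2)"
    and "\<forall>m n::nat. \<phi> (a1 ^ m * b1 ^ n) = complex_of_real (\<integral>p. fst p ^ m * snd p ^ n \<partial>mu)"
    and "\<forall>m n::nat. \<phi> (a2 ^ m * b2 ^ n) = complex_of_real (\<integral>p. fst p ^ m * snd p ^ n \<partial>mu)"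
  shows "\<exists>\<Phi> \<Psi>. bimonotone_pair_mu \<phi> a1 b1 a2 b2 \<Phi> \<Psi>"
proof -
  obtain \<Phi> \<Psi> where
    "word_functional (pair_algs a1 b1 a2 b2) \<Phi>"
    "\<forall>k\<in>{1,2}. \<forall>w. adm (pair_algs a1 b1 a2 b2) w \<and> (\<forall>l\<in>set w. fst (ltag l) = k)
        \<longrightarrow> \<Phi> w = \<phi> (wprod w)"
    "\<forall>w. adm (pair_algs a1 b1 a2 b2) w \<and> (\<forall>l\<in>set w. fst (ltag l) = 1)
        \<longrightarrow> \<Psi> w = prod_list (map lcoef w)"
    "\<forall>w. adm (pair_algs a1 b1 a2 b2) w \<and> (\<forall>l\<in>set w. fst (ltag l) = 2)
        \<longrightarrow> \<Psi> w = \<phi> (wprod w)"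
    "cbifree_property (pair_algs a1 b1 a2 b2) \<Phi> \<Psi>"
    "\<forall>w. adm (pair_algs a1 b1 a2 b2) w \<and> w \<noteq> [] \<and> (\<forall>l\<in>set w. lcoef l = 0)
        \<longrightarrow> \<phi> (wprod w) = \<Phi> w"
    using assms(2) unfolding bimonotone_indep_def by blast
  then have "bimonotone_pair \<phi> a1 b1 a2 b2 \<Phi> \<Psi>"
    using assms(1) by unfold_locales blast+
  moreover have "bimonotone_pair_mu_axioms \<phi> a1 b1 a2 b2"
    using assms(3,4) by unfold_locales (simp_all add: integral_mu)
  ultimately show ?thesis
    using bimonotone_pair_mu.intro by blast
qed

theorem mainTheorem14:
  fixes \<phi> :: "'a::cplx_algebra_1 \<Rightarrow> complex"
    and a1 b1 a2 b2 :: 'a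
  assumes "nc_space \<phi>"
    and "bimonotone_indep \<phi> (pair_algs a1 b1 a2 b2)"
    and "\<forall>m n::nat. \<phi> (a1 ^ m * b1 ^ n) = complex_of_real (\<integral>p. (fst p) ^ m * (snd p) ^ n \<partial>mu)"
    and "\<forall>m n::nat. \<phi> (a2 ^ m * b2 ^ n) = complex_of_real (\<integral>p. (fst p) ^ m * (snd p) ^ n \<partial>mu)"
  defines "X1 \<equiv> mat 4 4 (\<lambda>(r, s). \<phi> ((a1 + a2) ^ (fst (idx ! r) + fst (idx ! s))
                                   * (b1 + b2) ^ (snd (idx ! r) + snd (idx ! s))))"
  shows "X1 = mat_of_rows_list 4
              [[1, 1, 1, 1/2],
               [1, 3/2, 1/2, 5/8],
               [1, 1/2, 3/2, 5/8],
               [1/2, 5/8, 5/8, 3/4]]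
       \<and> det X1 = - 1/32
       \<and> \<not> (\<exists>\<nu> :: (real \<times> real) measure. sets \<nu> = sets borel \<and>
              (\<forall>m n::nat. integrable \<nu> (\<lambda>p. (fst p) ^ m * (snd p) ^ n) \<and>
                 \<phi> ((a1 + a2) ^ m * (b1 + b2) ^ n)
                   = complex_of_real (\<integral>p. (fst p) ^ m * (snd p) ^ n \<partial>\<nu>)))"
proof -
  obtain \<Phi> \<Psi> where "bimonotone_pair_mu \<phi> a1 b1 a2 b2 \<Phi> \<Psi>"
    using bimonotone_pair_mu_exists[OF assms(1-4)] by blast
  then interpret bimonotone_pair_mu \<phi> a1 b1 a2 b2 \<Phi> \<Psi> .
  have "X1 = X_bimonotone"
    unfolding X1_def by (rule moment_matrix_sums)
  then show ?thesis
    using det_X_bimonotone no_representing_measure by blast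
qed

end
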